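(* Let $p$ be a prime, $k$ a commutative ring of characteristic $p$, $n\in\mathbb{N}$, and $x\in W\Omega_{k[X_1,\ldots,X_n]/k}$. There exists $\varepsilon>0$ with $\gamma_\varepsilon(x)\neq-\infty$ if and only if there exists $\varepsilon'>0$ with $\zeta_{\varepsilon'}(x)\neq-\infty$.
   Context: $W\Omega=W\Omega_{k[\underline{X}]/k}$ is the (Langer–Zink) de Rham–Witt complex of $k[\underline X]=k[X_1,\ldots,X_n]$ over $k$, with $d$, $F$, $V$ and Teichmüller map $[\cdot]$. A weight function is a map $a\colon\{1,\ldots,n\}\to\mathbb{N}[1/p]$; $|a|=\sum_i a_i$; $\mathrm{Supp}(a)=\{i: a_i\neq0\}$; $a|_J$ equals $a$ on $J$ and $0$ elsewhere; $\mathrm{val}_p(a)=\min_{i\in\mathrm{Supp}(a)}\mathrm{val}_p(a_i)$, $u(a)=\max\{0,-\mathrm{val}_p(a)\}$ ($u(0)=0$). A partition of $a$ is a subset $I\subseteq\mathrm{Supp}(a)$; $\mathcal P$ is the set of pairs $(a,I)$. Order $\mathrm{Supp}(a)$ by $i\preceq i'$ iff $\mathrm{val}_p(a_i)<\mathrm{val}_p(a_{i'})$, or equality and $i\leqslant i'$. For $I=\{i_1\prec\cdots\prec i_m\}$: $I_0=\{i: i\prec i_1\}$ ($=\mathrm{Supp}(a)$ if $m=0$), $I_l=\{i: i_l\preceq i\prec i_{l+1}\}$ ($1\leqslant l<m$), $I_m=\{i: i_m\preceq i\}$. For $a\neq0$, $g(a)=F^{u(a)+\mathrm{val}_p(a)}d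 V^{u(a)}[\underline X^{p^{-\mathrm{val}_p(a)}a}]$ with $\underline X^c=\prod X_i^{c_i}$. For $\eta\in W(k)$: $e(\eta,a,I)=dV^{u(a)}(\eta[\underline X^{p^{u(a)}a|_{I_1}}])\prod_{l=2}^m g(a|_{I_l})$ if $I_0=\emptyset$ and $u(a)\neq0$, else $e(\eta,a,I)=V^{u(a)}(\eta[\underline X^{p^{u(a)}a|_{I_0}}])\prod_{l=1}^m g(a|_{I_l})$. Every $x$ is uniquely a convergent sum $\sum_{(a,I)\in\mathcal P}e(\eta_{a,I},a,I)$, $\eta_{a,I}\in W(k)$. $\mathrm{val}_V(\eta)=\sup\{m:\eta\in V^m(W(k))\}$ ($+\infty$ for $\eta=0$). For $\varepsilon>0$: $\gamma_\varepsilon(x)=\inf_{(a,I)}\big(\mathrm{val}_V(\eta_{a,I})+u(a)-\varepsilon|a|\big)$ and $\zeta_\varepsilon(x)=\inf_{(a,I)}\big(2n\,\mathrm{val}_V(\eta_{a,I})+c(a,I)u(a)-\varepsilon|a|\big)$, where $c(a,I)=\#I$ if $I_0=\emptyset$ and $\#I+1$ otherwise (empty infima are $+\infty$). *)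

theory Defs
  imports "HOL-Computational_Algebra.Primes" "HOL-Library.Extended_Real"
begin

text \<open>Coordinate model of the de Rham--Witt complex W Omega of k[X_1,...,X_n] over k
  (Langer--Zink): an element x is identified with its unique family of coefficients
  eta_(a,I) in W(k), indexed by pairs (a,I) in the set P, subject to convergence.
  A Witt vector in W(k) is represented by its sequence of Witt components nat => k,
  so that V^m(W(k)) consists of the vectors whose first m components vanish.\<close>

type_synonym weight = "nat \<Rightarrow> rat"
type_synonym 'k witt = "nat \<Rightarrow> 'k"

definition padic_val :: "nat \<Rightarrow> rat \<Rightarrow> int" where
  "padic_val p q = (case quotient_of q of (r, s) \<Rightarrow>
      int (multiplicity (int p) r) - int (multiplicity (int p) s))"

definition in_Npinv :: "nat \<Rightarrow> rat \<Rightarrow> bool" where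
  "in_Npinv p q \<longleftrightarrow> (\<exists>m e::nat. q = of_nat m / of_nat p ^ e)"

definition weight_fun :: "nat \<Rightarrow> nat \<Rightarrow> weight \<Rightarrow> bool" where
  "weight_fun p n a \<longleftrightarrow> (\<forall>i. i \<notin> {1..n} \<longrightarrow> a i = 0) \<and> (\<forall>i. in_Npinv p (a i))"

definition supp :: "weight \<Rightarrow> nat set" where
  "supp a = {i. a i \<noteq> 0}"

definition wabs :: "nat \<Rightarrow> weight \<Rightarrow> rat" where
  "wabs n a = (\<Sum>i\<in>{1..n}. a i)"

definition valp_w :: "nat \<Rightarrow> weight \<Rightarrow> int" where
  "valp_w p a = Min ((\<lambda>i. padic_val p (a i)) ` supp a)"

definition u_w :: "nat \<Rightarrow> weight \<Rightarrow> nat" where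
  "u_w p a = (if supp a = {} then 0 else nat (- valp_w p a))"

definition prec_eq :: "nat \<Rightarrow> weight \<Rightarrow> nat \<Rightarrow> nat \<Rightarrow> bool" where
  "prec_eq p a i j \<longleftrightarrow> padic_val p (a i) < padic_val p (a j)
      \<or> (padic_val p (a i) = padic_val p (a j) \<and> i \<le> j)"

text \<open>I_0 = elements of Supp(a) strictly preceding i_1 (all of Supp(a) if I is empty).\<close>
definition I0 :: "nat \<Rightarrow> weight \<Rightarrow> nat set \<Rightarrow> nat set" where
  "I0 p a I = {i \<in> supp a. \<forall>j\<in>I. prec_eq p a i j \<and> i \<noteq> j}"

definition c_coef :: "nat \<Rightarrow> weight \<Rightarrow> nat set \<Rightarrow> nat" where
  "c_coef p a I = (if I0 p a I = {} then card I else card I + 1)"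

definition partitions :: "nat \<Rightarrow> nat \<Rightarrow> (weight \<times> nat set) set" where
  "partitions p n = {(a, I). weight_fun p n a \<and> I \<subseteq> supp a}"

definition val_V :: "('k::zero) witt \<Rightarrow> nat" where
  "val_V \<eta> = (LEAST m. \<eta> m \<noteq> 0)"

text \<open>Coefficient families of elements of W Omega: the sum of the basic Witt
  differentials converges, i.e. for every m almost all eta_(a,I) lie in V^(m-u(a)) W(k).\<close>
definition dRW_elem :: "nat \<Rightarrow> nat \<Rightarrow> (weight \<times> nat set \<Rightarrow> ('k::zero) witt) \<Rightarrow> bool" where
  "dRW_elem p n \<eta> \<longleftrightarrow>
     (\<forall>m::nat. finite {(a, I) \<in> partitions p n.
         \<eta> (a, I) \<noteq> (\<lambda>_. 0) \<and> val_V (\<eta> (a, I)) + u_w p a < m})"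

text \<open>gamma_eps(x); terms with eta = 0 contribute +infinity and are omitted.\<close>
definition gamma_eps :: "nat \<Rightarrow> nat \<Rightarrow> real \<Rightarrow> (weight \<times> nat set \<Rightarrow> ('k::zero) witt) \<Rightarrow> ereal" where
  "gamma_eps p n \<epsilon> \<eta> = Inf {ereal (real (val_V (\<eta> (a, I))) + real (u_w p a)
        - \<epsilon> * real_of_rat (wabs n a)) | a I. (a, I) \<in> partitions p n \<and> \<eta> (a, I) \<noteq> (\<lambda>_. 0)}"

definition zeta_eps :: "nat \<Rightarrow> nat \<Rightarrow> real \<Rightarrow> (weight \<times> nat set \<Rightarrow> ('k::zero) witt) \<Rightarrow> ereal" where
  "zeta_eps p n \<epsilon> \<eta> = Inf {ereal (2 * real n * real (val_V (\<eta> (a, I)))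
        + real (c_coef p a I) * real (u_w p a)
        - \<epsilon> * real_of_rat (wabs n a)) | a I. (a, I) \<in> partitions p n \<and> \<eta> (a, I) \<noteq> (\<lambda>_. 0)}"

end

theory Submission
  imports Defs "HOL-Analysis.Extended_Real_Limits"
begin

text \<open>Both infima run over the same index set, and their terms differ only in the
  factors 2n versus 1 on val_V and c(a,I) versus 1 on u(a). Since 1 \<le> c(a,I) \<le> n + 1
  whenever u(a) \<noteq> 0, each gamma-term is at most the corresponding zeta-term (for n \<ge> 1),
  and each zeta-term is at most 2n + 1 times the gamma-term for eps / (2n + 1). For n = 0 all
  weights vanish and every zeta-term is 0.\<close>

lemma INF_ereal_cmult:
  assumes "c > (0::real)"
  shows "(INF x\<in>A. ereal c * f x) = ereal c * (INF x\<in>A. f x)"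
  using ereal_Inf_cmult[OF assms, of "\<lambda>y. y \<in> f ` A"]
  by (simp add: setcompr_eq_image image_image)

definition coeff_support :: "nat \<Rightarrow> nat \<Rightarrow> (weight \<times> nat set \<Rightarrow> ('k::zero) witt) \<Rightarrow> (weight \<times> nat set) set" where
  "coeff_support p n \<eta> = {x \<in> partitions p n. \<eta> x \<noteq> (\<lambda>_. 0)}"

definition gamma_term :: "nat \<Rightarrow> nat \<Rightarrow> real \<Rightarrow> ('k::zero) witt \<Rightarrow> weight \<Rightarrow> real" where
  "gamma_term p n \<epsilon> \<xi> a = real (val_V \<xi>) + real (u_w p a) - \<epsilon> * real_of_rat (wabs n a)"

definition zeta_term :: "nat \<Rightarrow> nat \<Rightarrow> real \<Rightarrow> ('k::zero) witt \<Rightarrow> weight \<Rightarrow> nat set \<Rightarrow> real" where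
  "zeta_term p n \<epsilon> \<xi> a I =
     2 * real n * real (val_V \<xi>) + real (c_coef p a I) * real (u_w p a) - \<epsilon> * real_of_rat (wabs n a)"

lemma gamma_eps_eq_INF:
  "gamma_eps p n \<epsilon> \<eta> = (INF (a, I)\<in>coeff_support p n \<eta>. ereal (gamma_term p n \<epsilon> (\<eta> (a, I)) a))"
  unfolding gamma_eps_def gamma_term_def coeff_support_def
  by (rule arg_cong[where f = Inf]) auto

lemma zeta_eps_eq_INF:
  "zeta_eps p n \<epsilon> \<eta> = (INF (a, I)\<in>coeff_support p n \<eta>. ereal (zeta_term p n \<epsilon> (\<eta> (a, I)) a I))"
  unfolding zeta_eps_def zeta_term_def coeff_support_def
  by (rule arg_cong[where f = Inf]) auto

lemma partitions_subset_atLeastAtMost: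
  assumes "(a, I) \<in> partitions p n"
  shows "supp a \<subseteq> {1..n}" and "I \<subseteq> {1..n}"
  using assms by (auto simp: partitions_def weight_fun_def supp_def)

lemma c_coef_le_Suc_if_in_partitions:
  assumes "(a, I) \<in> partitions p n"
  shows "c_coef p a I \<le> n + 1"
proof -
  have "card I \<le> n"
    using card_mono[OF _ partitions_subset_atLeastAtMost(2)[OF assms]] by simp
  then show ?thesis
    by (simp add: c_coef_def)
qed

lemma u_w_le_c_coef_mult_u_w:
  assumes "(a, I) \<in> partitions p n"
  shows "u_w p a \<le> c_coef p a I * u_w p a"
proof (cases "supp a = {}")
  case False
  have "1 \<le> c_coef p a I"
  proof (cases "I = {}")
    case True
    then have "I0 p a I = supp a"
      by (simp add: I0_def)
    with False True show ?thesis
      by (simp add: c_coef_def)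
  next
    case False
    have "finite I"
      using finite_subset[OF partitions_subset_atLeastAtMost(2)[OF assms]] by simp
    with False have "1 \<le> card I"
      by (simp add: Suc_le_eq card_gt_0_iff)
    then show ?thesis
      by (simp add: c_coef_def)
  qed
  then show ?thesis
    by simp
qed (simp add: u_w_def)

lemma gamma_term_le_zeta_term:
  assumes "n \<noteq> 0" and "(a, I) \<in> partitions p n"
  shows "gamma_term p n \<epsilon> \<xi> a \<le> zeta_term p n \<epsilon> \<xi> a I"
proof -
  have "real (val_V \<xi>) \<le> 2 * real n * real (val_V \<xi>)"
    using assms(1) by (simp add: mult_le_cancel_right1)
  moreover have "real (u_w p a) \<le> real (c_coef p a I) * real (u_w p a)"
    using u_w_le_c_coef_mult_u_w[OF assms(2)] by (metis of_nat_le_iff of_nat_mult)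
  ultimately show ?thesis
    by (simp add: gamma_term_def zeta_term_def)
qed

lemma zeta_term_le_scaled_gamma_term:
  assumes "(a, I) \<in> partitions p n"
  shows "zeta_term p n \<epsilon> \<xi> a I \<le> (2 * real n + 1) * gamma_term p n (\<epsilon> / (2 * real n + 1)) \<xi> a"
proof -
  let ?m = "2 * real n + 1"
  have "real (c_coef p a I) \<le> ?m"
    using c_coef_le_Suc_if_in_partitions[OF assms] by linarith
  then have c_u: "real (c_coef p a I) * real (u_w p a) \<le> ?m * real (u_w p a)"
    by (simp add: mult_right_mono)
  have val: "2 * real n * real (val_V \<xi>) \<le> ?m * real (val_V \<xi>)"
    by (simp add: algebra_simps)
  have "zeta_term p n \<epsilon> \<xi> a I
      = 2 * real n * real (val_V \<xi>) + real (c_coef p a I) * real (u_w p a) - \<epsilon> * real_of_rat (wabs n a)"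
    by (simp add: zeta_term_def)
  also have "\<dots> \<le> ?m * real (val_V \<xi>) + ?m * real (u_w p a) - \<epsilon> * real_of_rat (wabs n a)"
    using val c_u by (intro diff_right_mono add_mono)
  also have "\<dots> = ?m * gamma_term p n (\<epsilon> / ?m) \<xi> a"
    unfolding gamma_term_def by (simp add: field_simps add_pos_nonneg)
  finally show ?thesis .
qed

lemma zeta_term_zero_dim:
  assumes "(a, I) \<in> partitions p 0"
  shows "zeta_term p 0 \<epsilon> \<xi> a I = 0"
proof -
  have "supp a = {}"
    using partitions_subset_atLeastAtMost(1)[OF assms] by simp
  then have "u_w p a = 0"
    by (simp add: u_w_def)
  moreover have "wabs 0 a = 0"
    by (simp add: wabs_def)
  ultimately show ?thesis
    by (simp add: zeta_term_def)
qed

lemma gamma_eps_le_zeta_eps: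
  assumes "n \<noteq> 0"
  shows "gamma_eps p n \<epsilon> \<eta> \<le> zeta_eps p n \<epsilon> \<eta>"
  unfolding gamma_eps_eq_INF zeta_eps_eq_INF
  using gamma_term_le_zeta_term[OF assms]
  by (intro INF_superset_mono) (auto simp: coeff_support_def)

lemma zeta_eps_zero_dim_nonneg: "0 \<le> zeta_eps p 0 \<epsilon> \<eta>"
  unfolding zeta_eps_eq_INF
  by (rule INF_greatest) (auto simp: coeff_support_def zeta_term_zero_dim)

lemma zeta_eps_le_scaled_gamma_eps:
  "zeta_eps p n \<epsilon> \<eta> \<le> ereal (2 * real n + 1) * gamma_eps p n (\<epsilon> / (2 * real n + 1)) \<eta>"
proof -
  let ?m = "2 * real n + 1"
  have "zeta_eps p n \<epsilon> \<eta>
      \<le> (INF (a, I)\<in>coeff_support p n \<eta>. ereal ?m * ereal (gamma_term p n (\<epsilon> / ?m) (\<eta> (a, I)) a))"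
    unfolding zeta_eps_eq_INF
    using zeta_term_le_scaled_gamma_term
    by (intro INF_superset_mono) (auto simp: coeff_support_def)
  also have "\<dots> = ereal ?m * gamma_eps p n (\<epsilon> / ?m) \<eta>"
    unfolding gamma_eps_eq_INF by (subst INF_ereal_cmult[symmetric]) (simp_all add: case_prod_beta')
  finally show ?thesis .
qed

theorem mainTheorem2:
  fixes p n :: nat and \<eta> :: "weight \<times> nat set \<Rightarrow> ('k::comm_ring_1) witt"
  assumes "prime p"
    and "CHAR('k) = p"
    and "dRW_elem p n \<eta>"
  shows "(\<exists>\<epsilon>>0. gamma_eps p n \<epsilon> \<eta> \<noteq> -\<infinity>) \<longleftrightarrow> (\<exists>\<epsilon>'>0. zeta_eps p n \<epsilon>' \<eta> \<noteq> -\<infinity>)"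
proof
  assume "\<exists>\<epsilon>>0. gamma_eps p n \<epsilon> \<eta> \<noteq> -\<infinity>"
  then obtain \<epsilon> where "\<epsilon> > 0" and "gamma_eps p n \<epsilon> \<eta> \<noteq> -\<infinity>"
    by blast
  show "\<exists>\<epsilon>'>0. zeta_eps p n \<epsilon>' \<eta> \<noteq> -\<infinity>"
  proof (cases "n = 0")
    case True
    then have "zeta_eps p n 1 \<eta> \<noteq> -\<infinity>"
      using zeta_eps_zero_dim_nonneg[of p 1 \<eta>] by auto
    then show ?thesis
      using zero_less_one by blast
  next
    case False
    then have "zeta_eps p n \<epsilon> \<eta> \<noteq> -\<infinity>"
      using gamma_eps_le_zeta_eps[of n p \<epsilon> \<eta>] \<open>gamma_eps p n \<epsilon> \<eta> \<noteq> -\<infinity>\<close> by auto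
    then show ?thesis
      using \<open>\<epsilon> > 0\<close> by blast
  qed
next
  assume "\<exists>\<epsilon>'>0. zeta_eps p n \<epsilon>' \<eta> \<noteq> -\<infinity>"
  then obtain \<epsilon> where "\<epsilon> > 0" and "zeta_eps p n \<epsilon> \<eta> \<noteq> -\<infinity>"
    by blast
  then have "gamma_eps p n (\<epsilon> / (2 * real n + 1)) \<eta> \<noteq> -\<infinity>"
    using zeta_eps_le_scaled_gamma_eps[of p n \<epsilon> \<eta>] by auto
  moreover have "\<epsilon> / (2 * real n + 1) > 0"
    using \<open>\<epsilon> > 0\<close> by (simp add: add_pos_nonneg)
  ultimately show "\<exists>\<epsilon>>0. gamma_eps p n \<epsilon> \<eta> \<noteq> -\<infinity>"
    by blast
qed

end
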